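(* Let $\mathfrak g(t)=2+\alpha-(N+\alpha)t^{N-2}+(N-2)t^{N+\alpha}$ and $\mathfrak h(t)=\alpha-(N+\alpha)t^N+Nt^{N+\alpha}$. Then $\mathfrak g(t)>\mathfrak g(1)=0$ and $\mathfrak h(t)>\mathfrak h(1)=0$ for all $t\in[0,1)\cup(1,\infty)$. Moreover, if $V$ satisfies (V3), then for all $t\ge0$ and $x\in\mathbb R^N\setminus\{0\}$, $$(\alpha+Nt^{N+\alpha})V(x)-(N+\alpha)t^NV(tx)+(t^{N+\alpha}-1)\nabla V(x)\cdot x\ \ge\ -\frac{(N-2)^2\theta\,\mathfrak g(t)}{4|x|^2}.$$
   Context: $N\ge3$, $\alpha\in(0,N)$. (V3): $V\in C^1(\mathbb R^N,\mathbb R)$ and there is $\theta\in[0,1)$ such that for every $x\neq0$ the map $t\mapsto \frac{NV(tx)+\nabla V(tx)\cdot(tx)}{t^\alpha}+\frac{(N-2)^3\theta}{4t^{\alpha+2}|x|^2}$ is nonincreasing on $(0,\infty)$. *)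

theory Defs
  imports "HOL-Analysis.Analysis"
begin

definition gfun :: "nat \<Rightarrow> real \<Rightarrow> real \<Rightarrow> real" where
  "gfun N \<alpha> t = 2 + \<alpha> - (real N + \<alpha>) * t ^ (N - 2) + (real N - 2) * t powr (real N + \<alpha>)"

definition hfun :: "nat \<Rightarrow> real \<Rightarrow> real \<Rightarrow> real" where
  "hfun N \<alpha> t = \<alpha> - (real N + \<alpha>) * t ^ N + real N * t powr (real N + \<alpha>)"

definition V3 :: "real \<Rightarrow> ('a::euclidean_space \<Rightarrow> real) \<Rightarrow> ('a \<Rightarrow> 'a) \<Rightarrow> real \<Rightarrow> bool" where
  "V3 \<alpha> V GV \<theta> \<longleftrightarrow>
     (\<forall>x. (V has_derivative (\<lambda>h. GV x \<bullet> h)) (at x)) \<and> continuous_on UNIV GV \<and>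
     0 \<le> \<theta> \<and> \<theta> < 1 \<and>
     (\<forall>x. x \<noteq> 0 \<longrightarrow> antimono_on {0<..}
        (\<lambda>t. (real DIM('a) * V (t *\<^sub>R x) + GV (t *\<^sub>R x) \<bullet> (t *\<^sub>R x)) / t powr \<alpha>
             + (real DIM('a) - 2) ^ 3 * \<theta> / (4 * t powr (\<alpha> + 2) * norm x ^ 2)))"

end

theory Submission
  imports Defs
begin

text \<open>All three claims come from one observation: each function considered has a derivative on
  \<open>(0,\<infinity>)\<close> that is \<open>\<le> 0\<close> below \<open>t = 1\<close> and \<open>\<ge> 0\<close> above it, so it attains its minimum at
  \<open>t = 1\<close>. For the (V3) inequality, move the
  right-hand side to the left and call the result \<open>\<Phi>(t)\<close>; then
  \<open>\<Phi>'(t) = (N + \<alpha>) t powr (N + \<alpha> - 1) (F(1) - F(t))\<close>, where \<open>F\<close> is the map that (V3) declares nonincreasing,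
  and \<open>\<Phi>(1) = 0\<close>.\<close>

lemma DERIV_sign_change_imp_min:
  fixes f f' :: "real \<Rightarrow> real"
  assumes cont: "continuous_on {a..} f"
    and der: "\<And>z. a < z \<Longrightarrow> (f has_real_derivative f' z) (at z)"
    and nonpos: "\<And>z. a < z \<Longrightarrow> z < c \<Longrightarrow> f' z \<le> 0"
    and nonneg: "\<And>z. c < z \<Longrightarrow> f' z \<ge> 0"
    and "a \<le> c" "a \<le> t"
  shows "f c \<le> f t"
proof (cases "t \<le> c")
  case True
  show ?thesis
  proof (rule DERIV_nonpos_imp_decreasing_open[OF True])
    show "continuous_on {t..c} f" by (rule continuous_on_subset[OF cont]) (use \<open>a \<le> t\<close> in auto)
  qed (use der nonpos \<open>a \<le> t\<close> in force)
next
  case False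
  then have "c \<le> t" by simp
  show ?thesis
  proof (rule DERIV_nonneg_imp_increasing_open[OF \<open>c \<le> t\<close>])
    show "continuous_on {c..t} f" by (rule continuous_on_subset[OF cont]) (use \<open>a \<le> c\<close> in auto)
  qed (use der nonneg \<open>a \<le> c\<close> in force)
qed

lemma DERIV_sign_change_imp_strict_min:
  fixes f f' :: "real \<Rightarrow> real"
  assumes cont: "continuous_on {a..} f"
    and der: "\<And>z. a < z \<Longrightarrow> (f has_real_derivative f' z) (at z)"
    and neg: "\<And>z. a < z \<Longrightarrow> z < c \<Longrightarrow> f' z < 0"
    and pos: "\<And>z. c < z \<Longrightarrow> f' z > 0"
    and "a \<le> c" "a \<le> t" "t \<noteq> c"
  shows "f c < f t"
proof (cases "t < c")
  case True
  show ?thesis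
  proof (rule DERIV_neg_imp_decreasing_open[OF True])
    show "continuous_on {t..c} f" by (rule continuous_on_subset[OF cont]) (use \<open>a \<le> t\<close> in auto)
  qed (use der neg \<open>a \<le> t\<close> in force)
next
  case False
  with \<open>t \<noteq> c\<close> have "c < t" by simp
  show ?thesis
  proof (rule DERIV_pos_imp_increasing_open[OF \<open>c < t\<close>])
    show "continuous_on {c..t} f" by (rule continuous_on_subset[OF cont]) (use \<open>a \<le> c\<close> in auto)
  qed (use der pos \<open>a \<le> c\<close> in force)
qed

lemma continuous_on_powr_nonneg:
  "0 < (e::real) \<Longrightarrow> continuous_on {0..} (\<lambda>t::real. t powr e)"
  by (rule continuous_on_powr') (auto intro: continuous_intros)

lemma continuous_on_gfun: "0 < real N + a \<Longrightarrow> continuous_on {0..} (gfun N a)"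
  unfolding gfun_def
  by (intro continuous_intros continuous_on_powr_nonneg)

lemma continuous_on_hfun: "0 < real N + a \<Longrightarrow> continuous_on {0..} (hfun N a)"
  unfolding hfun_def
  by (intro continuous_intros continuous_on_powr_nonneg)

lemma powr_real_add_nat: "0 < (z::real) \<Longrightarrow> z powr (real n + b) = z ^ n * z powr b"
  by (simp add: powr_add powr_realpow)

lemma gfun_has_real_derivative:
  assumes "3 \<le> N" "0 < z"
  shows "(gfun N a has_real_derivative
           (real N + a) * (real N - 2) * z ^ (N - 3) * (z powr (a + 2) - 1)) (at z)"
proof -
  obtain n where N: "N = n + 3" using \<open>3 \<le> N\<close> by (metis add.commute le_iff_add)
  have "z powr (real N + a - 1) = z ^ n * z powr (a + 2)"
    using powr_real_add_nat[OF \<open>0 < z\<close>, of n "a + 2"] by (simp add: N algebra_simps)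
  then show ?thesis
    unfolding gfun_def using \<open>0 < z\<close>
    by (auto intro!: derivative_eq_intros simp: N algebra_simps) (cases n; simp add: algebra_simps)
qed

lemma hfun_has_real_derivative:
  assumes "1 \<le> N" "0 < z"
  shows "(hfun N a has_real_derivative
           (real N + a) * real N * z ^ (N - 1) * (z powr a - 1)) (at z)"
proof -
  obtain n where N: "N = n + 1" using \<open>1 \<le> N\<close> by (metis add.commute le_iff_add)
  have "z powr (real N + a - 1) = z ^ n * z powr a"
    using powr_real_add_nat[OF \<open>0 < z\<close>, of n a] by (simp add: N algebra_simps)
  then show ?thesis
    unfolding hfun_def using \<open>0 < z\<close>
    by (auto intro!: derivative_eq_intros simp: N algebra_simps) (cases n; simp add: algebra_simps)
qed

lemma gfun_gt_gfun_one:
  assumes "3 \<le> N" "0 < a" "0 \<le> t" "t \<noteq> 1"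
  shows "gfun N a 1 < gfun N a t"
proof (rule DERIV_sign_change_imp_strict_min[OF continuous_on_gfun gfun_has_real_derivative])
  fix z :: real
  assume "0 < z" "z < 1"
  then show "(real N + a) * (real N - 2) * z ^ (N - 3) * (z powr (a + 2) - 1) < 0"
    using assms by (simp add: mult_pos_neg powr01_less_one)
next
  fix z :: real
  assume "1 < z"
  then show "(real N + a) * (real N - 2) * z ^ (N - 3) * (z powr (a + 2) - 1) > 0"
    using assms gr_one_powr[of z "a + 2"] by simp
qed (use assms in auto)

lemma hfun_gt_hfun_one:
  assumes "1 \<le> N" "0 < a" "0 \<le> t" "t \<noteq> 1"
  shows "hfun N a 1 < hfun N a t"
proof (rule DERIV_sign_change_imp_strict_min[OF continuous_on_hfun hfun_has_real_derivative])
  fix z :: real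
  assume "0 < z" "z < 1"
  then show "(real N + a) * real N * z ^ (N - 1) * (z powr a - 1) < 0"
    using assms by (simp add: mult_pos_neg powr01_less_one)
next
  fix z :: real
  assume "1 < z"
  then show "(real N + a) * real N * z ^ (N - 1) * (z powr a - 1) > 0"
    using assms gr_one_powr[of z a] by simp
qed (use assms in auto)

lemma has_real_derivative_along_ray:
  fixes V :: "'a::real_inner \<Rightarrow> real"
  assumes "(V has_derivative (\<lambda>h. GV \<bullet> h)) (at (t *\<^sub>R x))"
  shows "((\<lambda>s. V (s *\<^sub>R x)) has_real_derivative GV \<bullet> x) (at t)"
proof -
  have "((\<lambda>s. s *\<^sub>R x) has_derivative (\<lambda>h. h *\<^sub>R x)) (at t)"
    by (intro derivative_eq_intros) auto
  from has_derivative_compose[OF this assms]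
  show ?thesis
    by (simp add: has_field_derivative_def mult.commute[of _ "GV \<bullet> x"])
qed

lemma V3_ray_inequality:
  fixes a \<theta> :: real and V :: "'a::euclidean_space \<Rightarrow> real" and GV :: "'a \<Rightarrow> 'a"
  defines "N \<equiv> DIM('a)"
  assumes N3: "3 \<le> N" and a: "0 < a" and V3: "V3 a V GV \<theta>" and x: "x \<noteq> 0" and t: "0 \<le> t"
  shows "(a + real N * t powr (real N + a)) * V x - (real N + a) * t ^ N * V (t *\<^sub>R x)
           + (t powr (real N + a) - 1) * (GV x \<bullet> x)
         \<ge> - ((real N - 2) ^ 2 * \<theta> * gfun N a t / (4 * norm x ^ 2))"
proof -
  define K where "K = (real N - 2) ^ 2 * \<theta> / (4 * norm x ^ 2)"
  define F where "F = (\<lambda>t. (real N * V (t *\<^sub>R x) + GV (t *\<^sub>R x) \<bullet> (t *\<^sub>R x)) / t powr a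
             + (real N - 2) ^ 3 * \<theta> / (4 * t powr (a + 2) * norm x ^ 2))"
  define \<Phi> where "\<Phi> = (\<lambda>t. (a + real N * t powr (real N + a)) * V x - (real N + a) * t ^ N * V (t *\<^sub>R x)
           + (t powr (real N + a) - 1) * (GV x \<bullet> x) + K * gfun N a t)"
  have dV: "\<And>y. (V has_derivative (\<lambda>h. GV y \<bullet> h)) (at y)" and antimono: "antimono_on {0<..} F"
    using V3 x unfolding V3_def N_def F_def by auto
  obtain n where N: "N = n + 3" using N3 by (metis add.commute le_iff_add)
  have "\<Phi> 1 \<le> \<Phi> t"
  proof (rule DERIV_sign_change_imp_min[where a = 0 and c = 1 and f = \<Phi>
      and f' = "\<lambda>z. (real N + a) * z ^ (N - 1) * z powr a * (F 1 - F z)"])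
    have "continuous_on UNIV V"
      using dV by (meson continuous_at_imp_continuous_on has_derivative_continuous)
    then have contW: "continuous_on {0..} (\<lambda>s. V (s *\<^sub>R x))"
      by (rule continuous_on_compose2[of UNIV V "{0..}" "\<lambda>s. s *\<^sub>R x"])
        (auto intro: continuous_intros)
    show "continuous_on {0..} \<Phi>"
      unfolding \<Phi>_def
      using a by (auto intro!: continuous_intros contW continuous_on_powr_nonneg continuous_on_gfun)
  next
    fix z :: real assume z: "0 < z"
    have dW: "((\<lambda>s. V (s *\<^sub>R x)) has_real_derivative GV (z *\<^sub>R x) \<bullet> x) (at z)"
      by (rule has_real_derivative_along_ray[OF dV])
    have pow1: "z powr (real N + a - 1) = z ^ (n + 2) * z powr a"
      using powr_real_add_nat[OF z, of "n + 2" a] by (simp add: N algebra_simps)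
    have pow2: "z powr (a + 2) = z powr a * z ^ 2"
      using powr_real_add_nat[OF z, of 2 a] by (simp add: algebra_simps)
    have F1: "F 1 = real N * V x + GV x \<bullet> x + (real N - 2) * K"
      unfolding F_def K_def by (simp add: power3_eq_cube power2_eq_square field_simps)
    have Fz: "F z = (real N * V (z *\<^sub>R x) + z * (GV (z *\<^sub>R x) \<bullet> x)) / z powr a
                    + (real N - 2) * K / (z powr a * z ^ 2)"
      unfolding F_def K_def pow2 by (simp add: power3_eq_cube power2_eq_square field_simps)
    have "(\<Phi> has_real_derivative
        real N * (real N + a) * z ^ (n + 2) * z powr a * V x
        - (real N + a) * (real N * z ^ (n + 2) * V (z *\<^sub>R x) + z ^ (n + 3) * (GV (z *\<^sub>R x) \<bullet> x))
        + (real N + a) * z ^ (n + 2) * z powr a * (GV x \<bullet> x)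
        + K * ((real N + a) * (real N - 2) * z ^ n * (z powr a * z ^ 2 - 1))) (at z)"
      (is "(_ has_real_derivative ?D) _")
      unfolding \<Phi>_def
      apply (rule derivative_eq_intros dW gfun_has_real_derivative[OF N3 z] refl | rule z)+
      unfolding pow1 pow2 by (simp add: N algebra_simps)
    moreover have "?D = (real N + a) * z ^ (N - 1) * z powr a * (F 1 - F z)"
      unfolding F1 Fz using z by (simp add: N field_simps power_add power2_eq_square power3_eq_cube)
    ultimately show "(\<Phi> has_real_derivative (real N + a) * z ^ (N - 1) * z powr a * (F 1 - F z)) (at z)"
      by simp
  next
    fix z :: real assume "0 < z" "z < 1"
    then have "F 1 \<le> F z" using monotone_onD[OF antimono, of z 1] by auto
    then show "(real N + a) * z ^ (N - 1) * z powr a * (F 1 - F z) \<le> 0"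
      using \<open>0 < z\<close> a by (simp add: mult_nonneg_nonpos)
  next
    fix z :: real assume "1 < z"
    then have "F z \<le> F 1" using monotone_onD[OF antimono, of 1 z] by auto
    then show "(real N + a) * z ^ (N - 1) * z powr a * (F 1 - F z) \<ge> 0"
      using \<open>1 < z\<close> a by simp
  qed (use t in auto)
  moreover have "\<Phi> 1 = 0" unfolding \<Phi>_def gfun_def by simp
  ultimately show ?thesis unfolding \<Phi>_def K_def by simp
qed

theorem lemma2p1:
  fixes \<alpha> \<theta> :: real and V :: "'a::euclidean_space \<Rightarrow> real" and GV :: "'a \<Rightarrow> 'a"
  assumes N3: "DIM('a) \<ge> 3"
    and alpha: "0 < \<alpha>" "\<alpha> < real DIM('a)"
  shows "gfun DIM('a) \<alpha> 1 = 0 \<and> hfun DIM('a) \<alpha> 1 = 0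
     \<and> (\<forall>t. 0 \<le> t \<and> t \<noteq> 1 \<longrightarrow> gfun DIM('a) \<alpha> t > gfun DIM('a) \<alpha> 1)
     \<and> (\<forall>t. 0 \<le> t \<and> t \<noteq> 1 \<longrightarrow> hfun DIM('a) \<alpha> t > hfun DIM('a) \<alpha> 1)
     \<and> (V3 \<alpha> V GV \<theta> \<longrightarrow>
         (\<forall>t x. 0 \<le> t \<and> x \<noteq> 0 \<longrightarrow>
            (\<alpha> + real DIM('a) * t powr (real DIM('a) + \<alpha>)) * V x
            - (real DIM('a) + \<alpha>) * t ^ DIM('a) * V (t *\<^sub>R x)
            + (t powr (real DIM('a) + \<alpha>) - 1) * (GV x \<bullet> x)
            \<ge> - ((real DIM('a) - 2) ^ 2 * \<theta> * gfun DIM('a) \<alpha> t / (4 * norm x ^ 2))))"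
proof (intro conjI allI impI)
  show "gfun DIM('a) \<alpha> 1 = 0" "hfun DIM('a) \<alpha> 1 = 0"
    by (simp_all add: gfun_def hfun_def)
qed (use gfun_gt_gfun_one[OF N3 alpha(1)] hfun_gt_hfun_one[of "DIM('a)", OF _ alpha(1)] N3
       V3_ray_inequality[OF N3 alpha(1)] in auto)

end
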